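(* The sets $C_{p_1},\dots,C_{p_n}$ are pairwise disjoint closed convex subsets of $\mathbb{R}^2$, and $C_{p_i}\subset W_{p_i}:=\{y\in\mathbb{R}^2: y\cdot(p_{i+1}-p_i)\le b_{i+1}-b_i\}\cap\{y\in\mathbb{R}^2: y\cdot(p_{i-1}-p_i)\le b_{i-1}-b_i\}$ for each $i$.
   Context: $n\ge3$; $p_1,\dots,p_n\in\mathbb{R}^2_{(u_1,u_2)}$ are distinct vertices, in counterclockwise order, of a convex polygon with interior $U$; indices mod $n$. $A\ge0$, $V(u)=A+\sum_i\frac{1}{2|u-p_i|}$. For $b_1,\dots,b_n\in\mathbb{R}$, $\varphi:\overline U\to\mathbb{R}$ is the unique continuous convex function, smooth in $U$, with $\det D^2\varphi=V$ in $U$, $\varphi(p_i)=b_i$, and $\varphi$ affine linear on each edge $[p_i,p_{i+1}]$. The subgradient set at a vertex is $C_{p_i}=\{y\in\mathbb{R}^2:\varphi(u)-\varphi(p_i)\ge\langle y,u-p_i\rangle\ \forall u\in\overline U\}$. *)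

theory Defs
  imports "HOL-Analysis.Analysis"
begin

definition pd :: "2 \<Rightarrow> (real^2 \<Rightarrow> real) \<Rightarrow> real^2 \<Rightarrow> real" where
  "pd i f u = deriv (\<lambda>t. f (u + t *\<^sub>R axis i 1)) 0"

fun Ck_on :: "nat \<Rightarrow> (real^2 \<Rightarrow> real) \<Rightarrow> (real^2) set \<Rightarrow> bool" where
  "Ck_on 0 f U = continuous_on U f"
| "Ck_on (Suc k) f U = (continuous_on U f \<and>
     (\<forall>i. (\<forall>u\<in>U. (\<lambda>t. f (u + t *\<^sub>R axis i 1)) differentiable (at 0)) \<and> Ck_on k (pd i f) U))"

definition smooth_on :: "(real^2 \<Rightarrow> real) \<Rightarrow> (real^2) set \<Rightarrow> bool" where
  "smooth_on f U = (\<forall>k. Ck_on k f U)"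

definition hessian :: "(real^2 \<Rightarrow> real) \<Rightarrow> real^2 \<Rightarrow> real^2^2" where
  "hessian f u = (\<chi> i j. pd i (pd j f) u)"

definition cross2 :: "real^2 \<Rightarrow> real^2 \<Rightarrow> real" where
  "cross2 x y = x$1 * y$2 - x$2 * y$1"

text \<open>p 0, ..., p (n-1) are the vertices, in counterclockwise order, of a convex polygon:
  every other vertex lies strictly to the left of each directed edge [p i, p (i+1 mod n)].\<close>
definition ccw_convex_polygon :: "nat \<Rightarrow> (nat \<Rightarrow> real^2) \<Rightarrow> bool" where
  "ccw_convex_polygon n p = (3 \<le> n \<and> (\<forall>i<n. \<forall>j<n. j \<noteq> i \<and> j \<noteq> Suc i mod n \<longrightarrow>
       cross2 (p (Suc i mod n) - p i) (p j - p i) > 0))"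

definition subgrad_vertex :: "(real^2 \<Rightarrow> real) \<Rightarrow> (real^2) set \<Rightarrow> real^2 \<Rightarrow> (real^2) set" where
  "subgrad_vertex \<phi> K q = {y. \<forall>u\<in>K. \<phi> u - \<phi> q \<ge> y \<bullet> (u - q)}"

end

theory Submission
  imports Defs
begin

text \<open>The subdifferentials at the vertices are intersections of closed half-planes, and the
  half-plane inclusions are the subgradient inequality tested at the two neighbouring vertices.
  For disjointness, suppose y is a subgradient at two vertices P and Q. Then
  g = \<phi> - \<phi> P - y \<bullet> (\<cdot> - P) is a nonnegative convex function that vanishes on the segment [P, Q].
  A third vertex R spans with P and Q a nondegenerate triangle inside the polygon, on which the
  Monge-Ampere equation gives det D^2 g = det D^2 \<phi> \<ge> c > 0. In two dimensions such a lower
  bound is incompatible with g vanishing on an edge of the triangle.\<close>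

lemma Ck_on_imp_continuous_on: "Ck_on k f U \<Longrightarrow> continuous_on U f"
  by (cases k) auto

lemma Ck_on_SucD: "Ck_on (Suc k) f U \<Longrightarrow> Ck_on k f U"
proof (induction k arbitrary: f)
  case (Suc k)
  then show ?case by (simp only: Ck_on.simps) (meson Ck_on_imp_continuous_on)
qed simp

lemma Ck_on_has_partial_derivative:
  assumes "Ck_on (Suc k) f U" "x + t0 *\<^sub>R axis i 1 \<in> U"
  shows "((\<lambda>t. f (x + t *\<^sub>R axis i 1)) has_real_derivative pd i f (x + t0 *\<^sub>R axis i 1)) (at t0)"
proof -
  let ?w = "x + t0 *\<^sub>R axis i 1"
  have "(\<lambda>t. f (?w + t *\<^sub>R axis i 1)) differentiable (at 0)" using assms by simp
  then have "((\<lambda>t. f (?w + t *\<^sub>R axis i 1)) has_real_derivative pd i f ?w) (at 0)"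
    unfolding pd_def using DERIV_deriv_iff_real_differentiable by blast
  then have "((\<lambda>t. f (?w + (t - t0) *\<^sub>R axis i 1)) has_real_derivative pd i f ?w) (at t0)"
    using DERIV_shift[of "\<lambda>t. f (?w + t *\<^sub>R axis i 1)" "pd i f ?w" t0 "-t0"] by simp
  moreover have "(\<lambda>t. f (?w + (t - t0) *\<^sub>R axis i 1)) = (\<lambda>t. f (x + t *\<^sub>R axis i 1))"
    by (auto simp: algebra_simps)
  ultimately show ?thesis by simp
qed

lemma MVT_from_zero:
  fixes g g' :: "real \<Rightarrow> real"
  assumes "\<And>\<tau>. \<bar>\<tau>\<bar> \<le> \<bar>h\<bar> \<Longrightarrow> (g has_real_derivative g' \<tau>) (at \<tau>)"
  shows "\<exists>\<tau>. \<bar>\<tau>\<bar> \<le> \<bar>h\<bar> \<and> g h - g 0 = h * g' \<tau>"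
proof (cases h "0::real" rule: linorder_cases)
  case less
  then obtain z where "h < z" "z < 0" "g 0 - g h = (0 - h) * g' z"
    using MVT2[of h 0 g g'] assms by auto
  then show ?thesis by (intro exI[of _ z]) (auto simp: algebra_simps)
next
  case greater
  then obtain z where "0 < z" "z < h" "g h - g 0 = (h - 0) * g' z"
    using MVT2[of 0 h g g'] assms by auto
  then show ?thesis by (intro exI[of _ z]) auto
qed auto

lemma Ck_on_axis_increment:
  assumes f: "Ck_on 1 f U" and seg: "\<And>\<tau>. \<bar>\<tau>\<bar> \<le> \<bar>a\<bar> \<Longrightarrow> z + \<tau> *\<^sub>R axis i 1 \<in> U"
  shows "\<exists>\<tau>. \<bar>\<tau>\<bar> \<le> \<bar>a\<bar> \<and> f (z + a *\<^sub>R axis i 1) - f z = a * pd i f (z + \<tau> *\<^sub>R axis i 1)"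
  using MVT_from_zero[of a "\<lambda>t. f (z + t *\<^sub>R axis i 1)" "\<lambda>\<tau>. pd i f (z + \<tau> *\<^sub>R axis i 1)"]
    Ck_on_has_partial_derivative[of 0 f U z] f seg by simp

definition dir_deriv :: "(real^2 \<Rightarrow> real) \<Rightarrow> real^2 \<Rightarrow> real^2 \<Rightarrow> real" where
  "dir_deriv f d x = d$1 * pd 1 f x + d$2 * pd 2 f x"

definition hessian_form :: "(real^2 \<Rightarrow> real) \<Rightarrow> real^2 \<Rightarrow> real^2 \<Rightarrow> real^2 \<Rightarrow> real" where
  "hessian_form f d e x = d$1 * dir_deriv (pd 1 f) e x + d$2 * dir_deriv (pd 2 f) e x"

lemma norm_axis_sum_le:
  "norm (\<tau> *\<^sub>R axis i (1::real) + \<sigma> *\<^sub>R (axis j 1 :: real^'n)) \<le> \<bar>\<tau>\<bar> + \<bar>\<sigma>\<bar>"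
  by (rule order_trans[OF norm_triangle_ineq]) simp

lemma Ck_on_axis_increment_estimate:
  assumes f: "Ck_on 1 f U" and seg: "\<And>\<tau>. \<bar>\<tau>\<bar> \<le> \<bar>a\<bar> \<Longrightarrow> z + \<tau> *\<^sub>R axis i 1 \<in> U"
    and close: "\<And>\<tau>. \<bar>\<tau>\<bar> \<le> \<bar>a\<bar> \<Longrightarrow> \<bar>pd i f (z + \<tau> *\<^sub>R axis i 1) - L\<bar> \<le> \<epsilon>"
  shows "\<bar>f (z + a *\<^sub>R axis i 1) - f z - a * L\<bar> \<le> \<bar>a\<bar> * \<epsilon>"
proof -
  obtain \<tau> where "\<bar>\<tau>\<bar> \<le> \<bar>a\<bar>" "f (z + a *\<^sub>R axis i 1) - f z = a * pd i f (z + \<tau> *\<^sub>R axis i 1)"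
    using Ck_on_axis_increment[OF f seg] by blast
  then show ?thesis using close by (simp add: abs_mult right_diff_distrib[symmetric] mult_left_mono)
qed

lemma Ck_on_1_has_derivative:
  assumes U: "open U" and f: "Ck_on 1 f U" and x: "x \<in> U"
  shows "(f has_derivative (\<lambda>v. dir_deriv f v x)) (at x)"
  unfolding has_derivative_at_alt
proof (intro conjI allI impI)
  show "bounded_linear (\<lambda>v. dir_deriv f v x)" unfolding dir_deriv_def
    by (intro bounded_linear_add bounded_linear_compose[OF bounded_linear_mult_left bounded_linear_vec_nth])
  fix e :: real assume e: "e > 0"
  obtain r where r: "r > 0" "ball x r \<subseteq> U" using U x openE by blast
  have "isCont (pd 2 f) x"
    using f U x by (simp add: Ck_on_imp_continuous_on continuous_on_eq_continuous_at)
  then obtain d1 where d1: "d1 > 0" "\<And>z. dist z x < d1 \<Longrightarrow> dist (pd 2 f z) (pd 2 f x) < e/2"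
    unfolding continuous_at_eps_delta using e by (meson half_gt_zero)
  have "((\<lambda>t. f (x + t *\<^sub>R axis 1 1)) has_derivative (\<lambda>t. pd 1 f x * t)) (at 0)"
    using Ck_on_has_partial_derivative[of 0 f U x 0 1] f x by (simp add: has_field_derivative_def)
  then obtain d2 where d2: "d2 > 0"
    "\<And>t. \<bar>t\<bar> < d2 \<Longrightarrow> \<bar>f (x + t *\<^sub>R axis 1 1) - f x - pd 1 f x * t\<bar> \<le> e/2 * \<bar>t\<bar>"
    unfolding has_derivative_at_alt using e by (force dest: spec[of _ "e/2"])
  show "\<exists>d>0. \<forall>y. norm (y - x) < d \<longrightarrow> norm (f y - f x - dir_deriv f (y - x) x) \<le> e * norm (y - x)"
  proof (intro exI[of _ "min (r/2) (min (d1/2) d2)"] conjI allI impI)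
    fix y assume y: "norm (y - x) < min (r/2) (min (d1/2) d2)"
    define h where "h = y - x"
    define z where "z = x + h$1 *\<^sub>R axis 1 1"
    have h: "\<bar>h$1\<bar> \<le> norm h" "\<bar>h$2\<bar> \<le> norm h" by (simp_all add: component_le_norm_cart)
    have near: "dist (z + \<tau> *\<^sub>R axis 2 1) x < min r d1" if "\<bar>\<tau>\<bar> \<le> \<bar>h$2\<bar>" for \<tau>
    proof -
      have "dist (z + \<tau> *\<^sub>R axis 2 1) x \<le> \<bar>h$1\<bar> + \<bar>\<tau>\<bar>"
        using norm_axis_sum_le[of "h$1" 1 \<tau> "2::2"] by (simp add: z_def dist_norm)
      then show ?thesis using h that y by (auto simp: h_def)
    qed
    have yz: "y = z + h$2 *\<^sub>R axis 2 1" by (simp add: z_def h_def vec_eq_iff forall_2 axis_def)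
    have A: "\<bar>f y - f z - h$2 * pd 2 f x\<bar> \<le> \<bar>h$2\<bar> * (e/2)"
      unfolding yz
    proof (rule Ck_on_axis_increment_estimate[OF f])
      show "z + \<tau> *\<^sub>R axis 2 1 \<in> U" if "\<bar>\<tau>\<bar> \<le> \<bar>h$2\<bar>" for \<tau>
        using near[OF that] r by (auto simp: dist_commute)
      show "\<bar>pd 2 f (z + \<tau> *\<^sub>R axis 2 1) - pd 2 f x\<bar> \<le> e/2" if "\<bar>\<tau>\<bar> \<le> \<bar>h$2\<bar>" for \<tau>
        using d1(2)[of "z + \<tau> *\<^sub>R axis 2 1"] near[OF that] by (simp add: dist_real_def)
    qed
    have B: "\<bar>f z - f x - h$1 * pd 1 f x\<bar> \<le> e/2 * \<bar>h$1\<bar>"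
      using d2(2)[of "h$1"] h y by (simp add: z_def h_def mult.commute)
    have "\<bar>f y - f x - (h$1 * pd 1 f x + h$2 * pd 2 f x)\<bar>
        \<le> \<bar>f y - f z - h$2 * pd 2 f x\<bar> + \<bar>f z - f x - h$1 * pd 1 f x\<bar>"
      by (rule order_trans[OF _ abs_triangle_ineq]) (simp add: algebra_simps)
    also have "\<dots> \<le> e/2 * (\<bar>h$1\<bar> + \<bar>h$2\<bar>)" using A B by (simp add: algebra_simps)
    also have "\<dots> \<le> e * norm h" using h e by simp
    finally show "norm (f y - f x - dir_deriv f (y - x) x) \<le> e * norm (y - x)"
      by (simp add: dir_deriv_def h_def)
  qed (use r d1 d2 in auto)
qed

lemma second_difference_eq_mixed_partial:
  assumes f: "Ck_on 2 f U" and r: "ball x r \<subseteq> U" and h: "0 < h" "2*h < r"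
  shows "\<exists>\<xi>. norm (\<xi> - x) \<le> 2*h \<and>
     f (x + h *\<^sub>R axis i 1 + h *\<^sub>R axis j 1) - f (x + h *\<^sub>R axis i 1) - f (x + h *\<^sub>R axis j 1) + f x
       = h * (h * pd j (pd i f) \<xi>)"
proof -
  let ?ei = "axis i 1 :: real^2" and ?ej = "axis j 1 :: real^2"
  have inU: "x + \<tau> *\<^sub>R ?ei + \<sigma> *\<^sub>R ?ej \<in> U" if "\<bar>\<tau>\<bar> \<le> h" "\<bar>\<sigma>\<bar> \<le> h" for \<tau> \<sigma>
  proof -
    have "norm (\<tau> *\<^sub>R ?ei + \<sigma> *\<^sub>R ?ej) < r" using norm_axis_sum_le[of \<tau> i \<sigma> j] that h by auto
    then show ?thesis
      using r by (metis add.assoc add_diff_cancel_left' dist_commute dist_norm mem_ball subsetD)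
  qed
  have f1: "Ck_on (Suc 1) f U" and fi: "Ck_on 1 (pd i f) U"
    using f by (simp_all add: numeral_2_eq_2)
  define a where "a \<tau> = f ((x + h *\<^sub>R ?ej) + \<tau> *\<^sub>R ?ei) - f (x + \<tau> *\<^sub>R ?ei)" for \<tau>
  define a' where "a' \<tau> = pd i f ((x + h *\<^sub>R ?ej) + \<tau> *\<^sub>R ?ei) - pd i f (x + \<tau> *\<^sub>R ?ei)" for \<tau>
  have "(a has_real_derivative a' \<tau>) (at \<tau>)" if "\<bar>\<tau>\<bar> \<le> \<bar>h\<bar>" for \<tau>
  proof -
    have "(x + h *\<^sub>R ?ej) + \<tau> *\<^sub>R ?ei \<in> U" "x + \<tau> *\<^sub>R ?ei \<in> U"
      using inU[of \<tau> h] inU[of \<tau> 0] that h by (simp_all add: algebra_simps)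
    then show ?thesis
      unfolding a_def a'_def by (intro DERIV_diff Ck_on_has_partial_derivative[OF f1])
  qed
  then obtain \<tau> where \<tau>: "\<bar>\<tau>\<bar> \<le> \<bar>h\<bar>" "a h - a 0 = h * a' \<tau>"
    using MVT_from_zero[of h a a'] by blast
  have "(x + \<tau> *\<^sub>R ?ei) + \<sigma> *\<^sub>R ?ej \<in> U" if "\<bar>\<sigma>\<bar> \<le> \<bar>h\<bar>" for \<sigma>
    using inU[of \<tau> \<sigma>] \<tau> h that by simp
  then obtain \<sigma> where \<sigma>: "\<bar>\<sigma>\<bar> \<le> \<bar>h\<bar>"
    "pd i f ((x + \<tau> *\<^sub>R ?ei) + h *\<^sub>R ?ej) - pd i f (x + \<tau> *\<^sub>R ?ei)
       = h * pd j (pd i f) ((x + \<tau> *\<^sub>R ?ei) + \<sigma> *\<^sub>R ?ej)"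
    using Ck_on_axis_increment[OF fi, of h "x + \<tau> *\<^sub>R ?ei" j] by blast
  have "a' \<tau> = pd i f ((x + \<tau> *\<^sub>R ?ei) + h *\<^sub>R ?ej) - pd i f (x + \<tau> *\<^sub>R ?ei)"
    unfolding a'_def by (simp add: algebra_simps)
  moreover have "f (x + h *\<^sub>R ?ei + h *\<^sub>R ?ej) - f (x + h *\<^sub>R ?ei) - f (x + h *\<^sub>R ?ej) + f x = a h - a 0"
    unfolding a_def by (simp add: algebra_simps)
  moreover have "norm ((x + \<tau> *\<^sub>R ?ei + \<sigma> *\<^sub>R ?ej) - x) \<le> 2*h"
    using norm_axis_sum_le[of \<tau> i \<sigma> j] \<tau> \<sigma> h by simp
  ultimately show ?thesis using \<tau> \<sigma> by (intro exI[of _ "x + \<tau> *\<^sub>R ?ei + \<sigma> *\<^sub>R ?ej"]) auto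
qed

text \<open>Schwarz's theorem: both mixed partials are limits of the same second difference quotient.\<close>
lemma pd_pd_commute:
  assumes U: "open U" and f: "Ck_on 2 f U" and x: "x \<in> U"
  shows "pd i (pd j f) x = pd j (pd i f) x"
proof (rule ccontr)
  let ?a = "pd i (pd j f) x" and ?b = "pd j (pd i f) x"
  assume "?a \<noteq> ?b"
  then have \<delta>: "dist ?a ?b / 2 > 0" by simp
  obtain r where r: "r > 0" "ball x r \<subseteq> U" using U x openE by blast
  have "isCont (pd i (pd j f)) x" "isCont (pd j (pd i f)) x"
    using f U x by (simp_all add: numeral_2_eq_2 Ck_on_imp_continuous_on continuous_on_eq_continuous_at)
  then obtain d1 d2 where
    d1: "d1 > 0" "\<And>z. dist z x < d1 \<Longrightarrow> dist (pd i (pd j f) z) ?a < dist ?a ?b / 2" and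
    d2: "d2 > 0" "\<And>z. dist z x < d2 \<Longrightarrow> dist (pd j (pd i f) z) ?b < dist ?a ?b / 2"
    unfolding continuous_at_eps_delta using \<delta> by blast
  define h where "h = min (r/4) (min (d1/4) (d2/4))"
  have h: "h > 0" "2*h < r" "2*h < d1" "2*h < d2" using r d1 d2 by (auto simp: h_def)
  obtain \<xi> where \<xi>: "norm (\<xi> - x) \<le> 2*h"
     "f (x + h *\<^sub>R axis i 1 + h *\<^sub>R axis j 1) - f (x + h *\<^sub>R axis i 1) - f (x + h *\<^sub>R axis j 1) + f x
       = h * (h * pd j (pd i f) \<xi>)"
    using second_difference_eq_mixed_partial[OF f r(2) h(1,2), of i j] by blast
  obtain \<eta> where \<eta>: "norm (\<eta> - x) \<le> 2*h"
     "f (x + h *\<^sub>R axis j 1 + h *\<^sub>R axis i 1) - f (x + h *\<^sub>R axis j 1) - f (x + h *\<^sub>R axis i 1) + f x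
       = h * (h * pd i (pd j f) \<eta>)"
    using second_difference_eq_mixed_partial[OF f r(2) h(1,2), of j i] by blast
  have "h * (h * pd j (pd i f) \<xi>) = h * (h * pd i (pd j f) \<eta>)"
    using \<xi>(2) \<eta>(2) by (simp add: algebra_simps)
  then have eq: "pd j (pd i f) \<xi> = pd i (pd j f) \<eta>" using h by simp
  have "dist ?a ?b \<le> dist (pd i (pd j f) \<eta>) ?a + dist (pd j (pd i f) \<xi>) ?b"
    using dist_triangle2[of ?a ?b "pd i (pd j f) \<eta>"] eq by (simp add: dist_commute)
  also have "\<dots> < dist ?a ?b / 2 + dist ?a ?b / 2"
    using d1(2)[of \<eta>] d2(2)[of \<xi>] \<xi>(1) \<eta>(1) h by (intro add_strict_mono) (simp_all add: dist_norm)
  finally show False by simp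
qed

lemma has_real_derivative_along_line:
  assumes U: "open U" and f: "Ck_on 1 f U" and a: "a + s *\<^sub>R d \<in> U"
  shows "((\<lambda>s. f (a + s *\<^sub>R d)) has_real_derivative dir_deriv f d (a + s *\<^sub>R d)) (at s)"
proof -
  have "((\<lambda>s. a + s *\<^sub>R d) has_derivative (\<lambda>h. h *\<^sub>R d)) (at s)"
    by (auto intro!: derivative_eq_intros)
  from has_derivative_compose[OF this Ck_on_1_has_derivative[OF U f a]]
  show ?thesis unfolding has_field_derivative_def
    by (rule has_derivative_eq_rhs) (auto simp: dir_deriv_def algebra_simps)
qed

lemma has_real_derivative_dir_deriv_along_line:
  assumes U: "open U" and f: "Ck_on 2 f U" and a: "a + s *\<^sub>R e \<in> U"
  shows "((\<lambda>s. dir_deriv f d (a + s *\<^sub>R e)) has_real_derivative hessian_form f d e (a + s *\<^sub>R e)) (at s)"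
proof -
  have "Ck_on 1 (pd 1 f) U" "Ck_on 1 (pd 2 f) U" using f by (simp_all add: numeral_2_eq_2)
  then show ?thesis
    unfolding dir_deriv_def[of f] hessian_form_def
    using has_real_derivative_along_line[OF U _ a] by (auto intro!: derivative_eq_intros)
qed

lemma continuous_on_hessian_form:
  assumes "Ck_on 2 f U"
  shows "continuous_on U (hessian_form f d e)"
proof -
  have "continuous_on U (pd i (pd j f))" for i j
    using assms by (simp add: numeral_2_eq_2 Ck_on_imp_continuous_on)
  then show ?thesis
    unfolding hessian_form_def dir_deriv_def by (intro continuous_intros)
qed

lemma hessian_form_det_identity:
  assumes U: "open U" and f: "Ck_on 2 f U" and x: "x \<in> U"
  shows "hessian_form f d d x * hessian_form f e e x - (hessian_form f d e x)^2
       = det (hessian f x) * (cross2 d e)^2"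
  using pd_pd_commute[OF U f x, of 1 2]
  unfolding hessian_form_def dir_deriv_def det_2 hessian_def cross2_def
  by (simp add: power2_eq_square algebra_simps)

lemma hessian_form_product_ge:
  assumes U: "open U" and f: "Ck_on 2 f U" and x: "x \<in> U" and c: "c \<le> det (hessian f x)"
  shows "c * (cross2 d e)^2 \<le> hessian_form f d d x * hessian_form f e e x"
proof -
  have "c * (cross2 d e)^2 \<le> det (hessian f x) * (cross2 d e)^2"
    using c by (intro mult_right_mono) auto
  also have "\<dots> \<le> hessian_form f d d x * hessian_form f e e x"
    using hessian_form_det_identity[OF U f x, of d e] zero_le_power2[of "hessian_form f d e x"]
    by linarith
  finally show ?thesis .
qed

lemma convex_on_compose_affine:
  fixes \<phi> :: "'b::real_vector \<Rightarrow> real" and L :: "'a::real_vector \<Rightarrow> 'b"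
  assumes conv: "convex_on K \<phi>" and L: "linear L" and S: "convex S"
    and into: "\<And>x. x \<in> S \<Longrightarrow> a + L x \<in> K"
  shows "convex_on S (\<lambda>x. \<phi> (a + L x))"
proof (rule convex_onI)
  fix t :: real and x y assume t: "0 < t" "t < 1" and xy: "x \<in> S" "y \<in> S"
  have "L ((1 - t) *\<^sub>R x + t *\<^sub>R y) = (1 - t) *\<^sub>R L x + t *\<^sub>R L y"
    using L by (simp add: linear_add linear_scale)
  then have "a + L ((1 - t) *\<^sub>R x + t *\<^sub>R y) = (1 - t) *\<^sub>R (a + L x) + t *\<^sub>R (a + L y)"
    by (simp add: algebra_simps)
  then show "\<phi> (a + L ((1 - t) *\<^sub>R x + t *\<^sub>R y)) \<le> (1 - t) * \<phi> (a + L x) + t * \<phi> (a + L y)"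
    using convex_onD[OF conv, of t "a + L x" "a + L y"] t xy into by simp
qed (rule S)

lemma convex_on_diff_affine:
  fixes f :: "'a::real_vector \<Rightarrow> real"
  assumes "convex_on S f" "linear l"
  shows "convex_on S (\<lambda>x. f x - (b + l x))"
proof (rule convex_onI)
  fix t :: real and x y assume "0 < t" "t < 1" "x \<in> S" "y \<in> S"
  moreover have "l ((1 - t) *\<^sub>R x + t *\<^sub>R y) = (1 - t) * l x + t * l y"
    using assms(2) by (simp add: linear_add linear_scale)
  ultimately show "f ((1 - t) *\<^sub>R x + t *\<^sub>R y) - (b + l ((1 - t) *\<^sub>R x + t *\<^sub>R y))
      \<le> (1 - t) * (f x - (b + l x)) + t * (f y - (b + l y))"
    using convex_onD[OF assms(1), of t x y] by (simp add: algebra_simps)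
qed (rule convex_on_imp_convex[OF assms(1)])

lemma convex_on_Icc_above_tangent:
  fixes h :: "real \<Rightarrow> real"
  assumes "convex_on {lo..hi} h" "lo < x" "x < hi" "(h has_real_derivative h') (at x)"
    and "lo \<le> y" "y \<le> hi"
  shows "h' * (y - x) \<le> h y - h x"
  using convex_on_imp_above_tangent[OF assms(1), of x y h'] assms(2-)
  by (auto intro: has_field_derivative_at_within)

lemma convex_on_second_derivative_nonneg:
  fixes h h' :: "real \<Rightarrow> real"
  assumes conv: "convex_on {lo..hi} h" and x: "lo < x" "x < hi"
    and d1: "\<And>x. lo < x \<Longrightarrow> x < hi \<Longrightarrow> (h has_real_derivative h' x) (at x)"
    and d2: "(h' has_real_derivative h'') (at x)"
  shows "0 \<le> h''"
proof (rule ccontr)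
  assume "\<not> 0 \<le> h''"
  then obtain \<delta> where \<delta>: "\<delta> > 0" "\<And>e. e > 0 \<Longrightarrow> e < \<delta> \<Longrightarrow> h' (x + e) < h' x"
    using DERIV_neg_dec_right[OF d2] by force
  define e where "e = min (\<delta>/2) ((hi - x)/2)"
  have "e \<le> (hi - x) / 2" unfolding e_def by (rule min.cobounded2)
  then have e: "0 < e" "e < \<delta>" "x + e < hi" using \<delta> x by (auto simp: e_def)
  have "h' x * e \<le> h (x + e) - h x"
    using convex_on_Icc_above_tangent[OF conv x d1[OF x], of "x + e"] x e by simp
  moreover have "h' (x + e) * (- e) \<le> h x - h (x + e)"
    using convex_on_Icc_above_tangent[OF conv _ e(3) d1, of x] x e by simp
  ultimately have "h' x * e \<le> h' (x + e) * e" by simp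
  then show False using \<delta>(2)[OF e(1,2)] e(1) by simp
qed

text \<open>Pointwise, 2l - l^2 F is the tangent line of the reciprocal 1/F at F = 1/l.\<close>
lemma integral_ge_reciprocal_tangent:
  fixes F G :: "real \<Rightarrow> real"
  assumes ab: "a \<le> b" and F: "(F has_integral I) {a..b}" and G: "G integrable_on {a..b}"
    and pos: "\<And>x. x \<in> {a..b} \<Longrightarrow> 0 < F x" and prod: "\<And>x. x \<in> {a..b} \<Longrightarrow> c \<le> F x * G x"
    and c: "0 \<le> c"
  shows "c * (2 * l * (b - a) - l^2 * I) \<le> integral {a..b} G"
proof -
  have tangent: "c * (2 * l - l^2 * F x) \<le> G x" if x: "x \<in> {a..b}" for x
  proof -
    have "c * (2 * l - l^2 * F x) \<le> c / F x"
    proof -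
      have "c / F x - c * (2 * l - l^2 * F x) = c * (1 - l * F x)^2 / F x"
        using pos[OF x] by (simp add: field_simps power2_eq_square)
      also have "\<dots> \<ge> 0" using pos[OF x] c by simp
      finally show ?thesis by simp
    qed
    also have "\<dots> \<le> G x" using prod[OF x] pos[OF x] by (simp add: divide_le_eq mult.commute)
    finally show ?thesis .
  qed
  have "((\<lambda>x. c * (2 * l - l^2 * F x)) has_integral c * (2 * l * (b - a) - l^2 * I)) {a..b}"
    using has_integral_mult_right[OF has_integral_diff[OF has_integral_const_real[of "2 * l" a b]
        has_integral_mult_right[OF F, of "l^2"]], of c] ab
    by (simp add: algebra_simps)
  from has_integral_le[OF this integrable_integral[OF G]] tangent
  show ?thesis by blast
qed

lemma convex_slice_integral_lower:
  fixes h h' h'' G :: "real \<Rightarrow> real"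
  assumes conv: "convex_on {0..3/4} h"
    and bnd: "\<And>s. 0 \<le> s \<Longrightarrow> s \<le> 3/4 \<Longrightarrow> 0 \<le> h s \<and> h s \<le> \<epsilon>"
    and d1: "\<And>s. 0 < s \<Longrightarrow> s < 3/4 \<Longrightarrow> (h has_real_derivative h' s) (at s)"
    and d2: "\<And>s. 0 < s \<Longrightarrow> s < 3/4 \<Longrightarrow> (h' has_real_derivative h'' s) (at s)"
    and MA: "\<And>s. 1/4 \<le> s \<Longrightarrow> s \<le> 1/2 \<Longrightarrow> c \<le> h'' s * G s"
    and G: "continuous_on {1/4..1/2} G" and c: "0 < c" and \<epsilon>: "0 < \<epsilon>"
  shows "c / (128 * \<epsilon>) \<le> integral {1/4..1/2} G"
proof -
  have "h' (1/2) / 4 \<le> h (3/4) - h (1/2)"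
    using convex_on_Icc_above_tangent[OF conv _ _ d1, of "1/2" "3/4"] by simp
  moreover have "- h' (1/4) / 4 \<le> h 0 - h (1/4)"
    using convex_on_Icc_above_tangent[OF conv _ _ d1, of "1/4" 0] by simp
  ultimately have slope: "h' (1/2) - h' (1/4) \<le> 8 * \<epsilon>"
    using bnd[of "3/4"] bnd[of "1/2"] bnd[of 0] bnd[of "1/4"] by simp
  have "(h'' has_integral (h' (1/2) - h' (1/4))) {1/4..1/2}"
  proof (rule fundamental_theorem_of_calculus)
    show "(h' has_vector_derivative h'' s) (at s within {1/4..1/2})" if "s \<in> {1/4..1/2}" for s
      using d2[of s] that
      by (simp add: has_real_derivative_iff_has_vector_derivative has_vector_derivative_at_within)
  qed simp
  moreover have "0 < h'' s" if "s \<in> {1/4..1/2}" for s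
  proof -
    have "0 \<le> h'' s" using convex_on_second_derivative_nonneg[OF conv _ _ d1 d2] that by simp
    moreover have "h'' s \<noteq> 0" using MA[of s] that c by auto
    ultimately show ?thesis by simp
  qed
  ultimately have "c * (2 * l * (1/2 - 1/4) - l^2 * (h' (1/2) - h' (1/4))) \<le> integral {1/4..1/2} G" for l
    using integral_ge_reciprocal_tangent[of "1/4" "1/2" h'' _ G c l] MA c
      integrable_continuous_interval[OF G] by simp
  from this[of "1 / (32 * \<epsilon>)"] have
    "c * (1 / (64 * \<epsilon>) - (h' (1/2) - h' (1/4)) / (32 * \<epsilon>)^2) \<le> integral {1/4..1/2} G"
    by (simp add: power_divide)
  moreover have "c / (128 * \<epsilon>) \<le> c * (1 / (64 * \<epsilon>) - (h' (1/2) - h' (1/4)) / (32 * \<epsilon>)^2)"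
  proof -
    have "(h' (1/2) - h' (1/4)) / (32 * \<epsilon>)^2 \<le> 8 * \<epsilon> / (32 * \<epsilon>)^2"
      using slope \<epsilon> by (intro divide_right_mono) auto
    also have "\<dots> = 1 / (128 * \<epsilon>)" using \<epsilon> by (simp add: power2_eq_square field_simps)
    finally have "1 / (128 * \<epsilon>) \<le> 1 / (64 * \<epsilon>) - (h' (1/2) - h' (1/4)) / (32 * \<epsilon>)^2"
      using \<epsilon> by (simp add: field_simps)
    from mult_left_mono[OF this, of c] c show ?thesis by simp
  qed
  ultimately show ?thesis by linarith
qed

lemma convex_slice_integral_upper:
  fixes h h' G :: "real \<Rightarrow> real"
  assumes conv: "convex_on {0..1/4} h" and h0: "h 0 \<le> 0"
    and nonneg: "\<And>t. 0 \<le> t \<Longrightarrow> t \<le> 1/4 \<Longrightarrow> 0 \<le> h t"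
    and d1: "\<And>t. 0 < t \<Longrightarrow> t < 1/4 \<Longrightarrow> (h has_real_derivative h' t) (at t)"
    and d2: "\<And>t. 0 < t \<Longrightarrow> t < 1/4 \<Longrightarrow> (h' has_real_derivative G t) (at t)"
    and e: "0 < e" "e \<le> 1/8"
  shows "integral {e..1/8} G \<le> 8 * h (1/4)"
proof -
  have "(G has_integral (h' (1/8) - h' e)) {e..1/8}"
  proof (rule fundamental_theorem_of_calculus)
    show "(h' has_vector_derivative G t) (at t within {e..1/8})" if "t \<in> {e..1/8}" for t
      using d2[of t] that e
      by (simp add: has_real_derivative_iff_has_vector_derivative has_vector_derivative_at_within)
  qed (use e in simp)
  moreover have "h' (1/8) / 8 \<le> h (1/4) - h (1/8)"
    using convex_on_Icc_above_tangent[OF conv _ _ d1, of "1/8" "1/4"] by simp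
  moreover have "h' e * (- e) \<le> h 0 - h e"
    using convex_on_Icc_above_tangent[OF conv _ _ d1, of e 0] e by simp
  moreover have "0 \<le> h' e * e" using calculation(3) h0 nonneg[of e] e by simp
  then have "0 \<le> h' e" using e by (simp add: zero_le_mult_iff)
  ultimately show ?thesis
    using h0 nonneg[of "1/8"] e by (simp add: integral_unique)
qed

text \<open>The inner integrals grow like C/t as t \<rightarrow> 0, so the iterated integral over
  [a, b] \<times> [e, \<tau>] grows like C ln(1/e); integrating in the other order bounds it uniformly.\<close>
lemma iterated_integral_log_divergence:
  fixes G :: "real \<Rightarrow> real \<Rightarrow> real"
  assumes ab: "a \<le> b" and \<tau>: "0 < \<tau>" and C: "0 < C" and B: "0 \<le> B"
    and cont: "continuous_on ({a..b} \<times> {0<..\<tau>}) (\<lambda>(s, t). G s t)"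
    and lower: "\<And>t. 0 < t \<Longrightarrow> t \<le> \<tau> \<Longrightarrow> C / t \<le> integral {a..b} (\<lambda>s. G s t)"
    and upper: "\<And>s e. a \<le> s \<Longrightarrow> s \<le> b \<Longrightarrow> 0 < e \<Longrightarrow> e \<le> \<tau> \<Longrightarrow> integral {e..\<tau>} (\<lambda>t. G s t) \<le> B"
  shows False
proof -
  define e where "e = \<tau> * exp (- ((b - a) * B / C) - 1)"
  have "0 \<le> (b - a) * B / C" using ab B C by simp
  then have e: "0 < e" "e \<le> \<tau>" using \<tau> by (auto simp: e_def mult_left_le)
  have cont_box: "continuous_on (cbox (a, e) (b, \<tau>)) (\<lambda>(s, t). G s t)"
    by (rule continuous_on_subset[OF cont]) (use e in \<open>auto simp: cbox_Pair_eq\<close>)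
  have log: "((\<lambda>t. C / t) has_integral (C * ln \<tau> - C * ln e)) {e..\<tau>}"
  proof (rule fundamental_theorem_of_calculus)
    show "((\<lambda>t. C * ln t) has_vector_derivative C / t) (at t within {e..\<tau>})" if "t \<in> {e..\<tau>}" for t
    proof -
      have "((\<lambda>t. C * ln t) has_real_derivative C * (1 / t)) (at t)"
        using that e by (auto intro!: derivative_eq_intros)
      then show ?thesis
        by (simp add: has_real_derivative_iff_has_vector_derivative has_vector_derivative_at_within)
    qed
  qed (use e in simp)
  have inner: "(\<lambda>t. integral {a..b} (\<lambda>s. G s t)) integrable_on {e..\<tau>}"
  proof -
    have "continuous_on (cbox (e, a) (\<tau>, b)) ((\<lambda>(s, t). G s t) \<circ> prod.swap)"
      using cont_box by (intro continuous_on_compose continuous_intros) (simp add: cbox_Pair_eq product_swap)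
    from integral_integrable_2dim[OF this] show ?thesis by (simp add: cbox_interval)
  qed
  have "C * ln \<tau> - C * ln e \<le> integral {e..\<tau>} (\<lambda>t. integral {a..b} (\<lambda>s. G s t))"
    by (rule has_integral_le[OF log integrable_integral[OF inner]]) (use lower e in auto)
  also have "\<dots> = integral {a..b} (\<lambda>s. integral {e..\<tau>} (\<lambda>t. G s t))"
    using integral_swap_continuous[OF cont_box] by (simp add: cbox_interval)
  also have "\<dots> \<le> integral {a..b} (\<lambda>s. B)"
    using integral_integrable_2dim[OF cont_box] upper e
    by (intro integral_le) (auto simp: cbox_interval)
  also have "\<dots> = (b - a) * B" using ab by simp
  finally have "C * (ln \<tau> - ln e) \<le> (b - a) * B" by (simp add: right_diff_distrib)
  moreover have "ln \<tau> - ln e = (b - a) * B / C + 1" using \<tau> by (simp add: e_def ln_mult)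
  then have "C * (ln \<tau> - ln e) = (b - a) * B + C" using C by (simp add: field_simps)
  ultimately show False using C by linarith
qed

definition unit_triangle :: "(real \<times> real) set" where
  "unit_triangle = {(s, t). 0 \<le> s \<and> 0 \<le> t \<and> s + t \<le> 1}"

lemma convex_unit_triangle: "convex unit_triangle"
proof (rule convexI)
  fix x y :: "real \<times> real" and u v :: real
  assume "x \<in> unit_triangle" "y \<in> unit_triangle" and uv: "0 \<le> u" "0 \<le> v" "u + v = 1"
  then obtain s t s' t' where x: "x = (s, t)" "0 \<le> s" "0 \<le> t" "s + t \<le> 1"
    and y: "y = (s', t')" "0 \<le> s'" "0 \<le> t'" "s' + t' \<le> 1"
    by (auto simp: unit_triangle_def)
  have "u * s + v * s' + (u * t + v * t') = u * (s + t) + v * (s' + t')" by (simp add: algebra_simps)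
  also have "\<dots> \<le> u * 1 + v * 1" using x y uv by (intro add_mono mult_left_mono) auto
  finally show "u *\<^sub>R x + v *\<^sub>R y \<in> unit_triangle"
    using x y uv by (simp add: unit_triangle_def)
qed

lemma convex_on_unit_triangle_le:
  assumes conv: "convex_on unit_triangle G" and edge: "\<And>s. 0 \<le> s \<Longrightarrow> s \<le> 1 \<Longrightarrow> G (s, 0) \<le> 0"
    and st: "(s, t) \<in> unit_triangle"
  shows "G (s, t) \<le> t * G (0, 1)"
proof (cases "t = 1")
  case True
  with st have "s = 0" by (simp add: unit_triangle_def)
  with True show ?thesis by simp
next
  case False
  then have t: "0 \<le> t" "t < 1" "0 \<le> s" "s \<le> 1 - t" using st by (auto simp: unit_triangle_def)
  define s' where "s' = s / (1 - t)"
  have s': "0 \<le> s'" "s' \<le> 1" using t by (auto simp: s'_def divide_le_eq)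
  have "(s, t) = (1 - t) *\<^sub>R (s', 0) + t *\<^sub>R (0, 1)" using t by (simp add: s'_def)
  then have "G (s, t) \<le> (1 - t) * G (s', 0) + t * G (0, 1)"
    using convex_onD[OF conv, of t "(s', 0)" "(0, 1)"] t s' by (simp add: unit_triangle_def)
  moreover have "(1 - t) * G (s', 0) \<le> 0" using edge[OF s'] t by (simp add: mult_nonneg_nonpos)
  ultimately show ?thesis by simp
qed

lemma unit_triangle_slice_integral_lower:
  fixes g gs gss gtt :: "real \<Rightarrow> real \<Rightarrow> real"
  assumes convex: "convex_on unit_triangle (\<lambda>(s, t). g s t)"
    and nonneg: "\<And>s t. (s, t) \<in> unit_triangle \<Longrightarrow> 0 \<le> g s t"
    and edge: "\<And>s. 0 \<le> s \<Longrightarrow> s \<le> 1 \<Longrightarrow> g s 0 \<le> 0"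
    and ds: "\<And>s t. 0 < s \<Longrightarrow> 0 < t \<Longrightarrow> s + t < 1 \<Longrightarrow> ((\<lambda>s. g s t) has_real_derivative gs s t) (at s)"
    and dss: "\<And>s t. 0 < s \<Longrightarrow> 0 < t \<Longrightarrow> s + t < 1 \<Longrightarrow> ((\<lambda>s. gs s t) has_real_derivative gss s t) (at s)"
    and MA: "\<And>s t. 0 < s \<Longrightarrow> 0 < t \<Longrightarrow> s + t < 1 \<Longrightarrow> c \<le> gss s t * gtt s t" and c: "0 < c"
    and cont: "continuous_on {(s, t). 0 < s \<and> 0 < t \<and> s + t < 1} (\<lambda>(s, t). gtt s t)"
    and t: "0 < t" "t \<le> 1/8"
  shows "c / (128 * (g 0 1 + 1)) / t \<le> integral {1/4..1/2} (\<lambda>s. gtt s t)"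
proof -
  define M where "M = g 0 1 + 1"
  have M: "0 < M" using nonneg[of 0 1] by (simp add: M_def unit_triangle_def)
  have "c / (128 * (t * M)) \<le> integral {1/4..1/2} (\<lambda>s. gtt s t)"
  proof (rule convex_slice_integral_lower[where h' = "\<lambda>s. gs s t" and h'' = "\<lambda>s. gss s t"])
    have "linear (\<lambda>s::real. (s, 0::real))" by (auto intro!: linearI)
    from convex_on_compose_affine[OF convex this, of "{0..3/4}" "(0, t)"] t
    show "convex_on {0..3/4} (\<lambda>s. g s t)" by (simp add: unit_triangle_def)
    have "continuous_on {1/4..1/2} (\<lambda>s. (\<lambda>(s, t). gtt s t) (s, t))"
      by (rule continuous_on_compose2[OF cont]) (use t in \<open>auto intro!: continuous_intros\<close>)
    then show "continuous_on {1/4..1/2} (\<lambda>s. gtt s t)" by simp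
    show "0 \<le> g s t \<and> g s t \<le> t * M" if "0 \<le> s" "s \<le> 3/4" for s
    proof -
      have st: "(s, t) \<in> unit_triangle" using that t by (simp add: unit_triangle_def)
      have "g s t \<le> t * g 0 1" using convex_on_unit_triangle_le[OF convex _ st] edge by simp
      also have "\<dots> \<le> t * M" using t by (simp add: M_def)
      finally show ?thesis using nonneg[OF st] by simp
    qed
    show "((\<lambda>s. g s t) has_real_derivative gs s t) (at s)" if "0 < s" "s < 3/4" for s
      using ds[of s t] that t by simp
    show "((\<lambda>s. gs s t) has_real_derivative gss s t) (at s)" if "0 < s" "s < 3/4" for s
      using dss[of s t] that t by simp
    show "c \<le> gss s t * gtt s t" if "1/4 \<le> s" "s \<le> 1/2" for s
      using MA[of s t] that t by simp
  qed (use t M c in simp_all)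
  then show ?thesis by (simp add: M_def ac_simps)
qed

lemma unit_triangle_slice_integral_upper:
  fixes g gt gtt :: "real \<Rightarrow> real \<Rightarrow> real"
  assumes convex: "convex_on unit_triangle (\<lambda>(s, t). g s t)"
    and nonneg: "\<And>s t. (s, t) \<in> unit_triangle \<Longrightarrow> 0 \<le> g s t"
    and edge: "\<And>s. 0 \<le> s \<Longrightarrow> s \<le> 1 \<Longrightarrow> g s 0 \<le> 0"
    and dt: "\<And>s t. 0 < s \<Longrightarrow> 0 < t \<Longrightarrow> s + t < 1 \<Longrightarrow> ((\<lambda>t. g s t) has_real_derivative gt s t) (at t)"
    and dtt: "\<And>s t. 0 < s \<Longrightarrow> 0 < t \<Longrightarrow> s + t < 1 \<Longrightarrow> ((\<lambda>t. gt s t) has_real_derivative gtt s t) (at t)"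
    and s: "1/4 \<le> s" "s \<le> 1/2" and e: "0 < e" "e \<le> 1/8"
  shows "integral {e..1/8} (\<lambda>t. gtt s t) \<le> 2 * g 0 1"
proof -
  have "integral {e..1/8} (\<lambda>t. gtt s t) \<le> 8 * g s (1/4)"
  proof (rule convex_slice_integral_upper[where h' = "\<lambda>t. gt s t"])
    have "linear (\<lambda>t::real. (0::real, t))" by (auto intro!: linearI)
    from convex_on_compose_affine[OF convex this, of "{0..1/4}" "(s, 0)"] s
    show "convex_on {0..1/4} (\<lambda>t. g s t)" by (simp add: unit_triangle_def)
    show "0 \<le> g s t" if "0 \<le> t" "t \<le> 1/4" for t
      using nonneg[of s t] that s by (simp add: unit_triangle_def)
    show "((\<lambda>t. g s t) has_real_derivative gt s t) (at t)" if "0 < t" "t < 1/4" for t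
      using dt[of s t] that s by simp
    show "((\<lambda>t. gt s t) has_real_derivative gtt s t) (at t)" if "0 < t" "t < 1/4" for t
      using dtt[of s t] that s by simp
  qed (use edge s e in simp_all)
  also have "\<dots> \<le> 2 * g 0 1"
    using convex_on_unit_triangle_le[OF convex, of s "1/4"] edge s by (simp add: unit_triangle_def)
  finally show ?thesis .
qed

text \<open>By convexity g \<le> t g(0, 1), so on each slice t = const the slope of g varies by O(t) over
  s \<in> [1/4, 1/2], and g_ss g_tt \<ge> c forces the s-integral of g_tt to be of order c/t. Integrating
  over t diverges logarithmically, whereas for fixed s the t-integral g_t(s, 1/8) - g_t(s, e) is
  bounded by convexity.\<close>
lemma no_edge_contact_of_MA_lower_bound:
  fixes g gs gt gss gtt :: "real \<Rightarrow> real \<Rightarrow> real"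
  assumes convex: "convex_on unit_triangle (\<lambda>(s, t). g s t)"
    and nonneg: "\<And>s t. (s, t) \<in> unit_triangle \<Longrightarrow> 0 \<le> g s t"
    and edge: "\<And>s. 0 \<le> s \<Longrightarrow> s \<le> 1 \<Longrightarrow> g s 0 \<le> 0"
    and ds: "\<And>s t. 0 < s \<Longrightarrow> 0 < t \<Longrightarrow> s + t < 1 \<Longrightarrow> ((\<lambda>s. g s t) has_real_derivative gs s t) (at s)"
    and dt: "\<And>s t. 0 < s \<Longrightarrow> 0 < t \<Longrightarrow> s + t < 1 \<Longrightarrow> ((\<lambda>t. g s t) has_real_derivative gt s t) (at t)"
    and dss: "\<And>s t. 0 < s \<Longrightarrow> 0 < t \<Longrightarrow> s + t < 1 \<Longrightarrow> ((\<lambda>s. gs s t) has_real_derivative gss s t) (at s)"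
    and dtt: "\<And>s t. 0 < s \<Longrightarrow> 0 < t \<Longrightarrow> s + t < 1 \<Longrightarrow> ((\<lambda>t. gt s t) has_real_derivative gtt s t) (at t)"
    and MA: "\<And>s t. 0 < s \<Longrightarrow> 0 < t \<Longrightarrow> s + t < 1 \<Longrightarrow> c \<le> gss s t * gtt s t" and c: "0 < c"
    and cont: "continuous_on {(s, t). 0 < s \<and> 0 < t \<and> s + t < 1} (\<lambda>(s, t). gtt s t)"
  shows False
proof (rule iterated_integral_log_divergence)
  show "continuous_on ({1/4..1/2} \<times> {0<..1/8}) (\<lambda>(s, t). gtt s t)"
    by (rule continuous_on_subset[OF cont]) auto
  show "c / (128 * (g 0 1 + 1)) / t \<le> integral {1/4..1/2} (\<lambda>s. gtt s t)" if "0 < t" "t \<le> 1/8" for t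
    by (rule unit_triangle_slice_integral_lower[OF convex nonneg edge ds dss MA c cont that])
  show "integral {e..1/8} (\<lambda>t. gtt s t) \<le> 2 * g 0 1" if "1/4 \<le> s" "s \<le> 1/2" "0 < e" "e \<le> 1/8" for s e
    by (rule unit_triangle_slice_integral_upper[OF convex nonneg edge dt dtt that])
  show "0 < c / (128 * (g 0 1 + 1))" "0 \<le> 2 * g 0 1"
    using nonneg[of 0 1] c by (simp_all add: unit_triangle_def)
qed simp_all

lemma cross2_decomposition:
  assumes "cross2 d e \<noteq> 0"
  shows "w = (cross2 w e / cross2 d e) *\<^sub>R d + (cross2 d w / cross2 d e) *\<^sub>R e"
proof -
  have "cross2 d e *\<^sub>R w = cross2 w e *\<^sub>R d + cross2 d w *\<^sub>R e"
    by (simp add: vec_eq_iff forall_2 cross2_def algebra_simps)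
  then have "w = inverse (cross2 d e) *\<^sub>R (cross2 w e *\<^sub>R d + cross2 d w *\<^sub>R e)"
    using assms by (metis left_inverse scaleR_one scaleR_scaleR)
  then show ?thesis by (simp add: scaleR_add_right divide_inverse mult.commute)
qed

lemma triangle_point_in_convex_hull:
  assumes "0 \<le> s" "0 \<le> t" "s + t \<le> 1"
  shows "P + s *\<^sub>R (Q - P) + t *\<^sub>R (R - P) \<in> convex hull {P, Q, R}"
proof -
  have "P + s *\<^sub>R (Q - P) + t *\<^sub>R (R - P) = (1 - s - t) *\<^sub>R P + s *\<^sub>R Q + t *\<^sub>R R"
    by (simp add: algebra_simps)
  then show ?thesis
    unfolding convex_hull_3 using assms by (intro CollectI exI[of _ "1 - s - t"] exI[of _ s] exI[of _ t]) auto
qed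

lemma triangle_point_in_interior_convex_hull:
  assumes cr: "cross2 (Q - P) (R - P) \<noteq> 0" and st: "0 < s" "0 < t" "s + t < 1"
  shows "P + s *\<^sub>R (Q - P) + t *\<^sub>R (R - P) \<in> interior (convex hull {P, Q, R})"
proof -
  define c where "c = cross2 (Q - P) (R - P)"
  define \<sigma> where "\<sigma> z = cross2 (z - P) (R - P) / c" for z
  define \<tau> where "\<tau> z = cross2 (Q - P) (z - P) / c" for z
  define T where "T = {z. 0 < \<sigma> z} \<inter> {z. 0 < \<tau> z} \<inter> {z. \<sigma> z + \<tau> z < 1}"
  have "c \<noteq> 0" using cr by (simp add: c_def)
  then have "continuous_on UNIV \<sigma>" "continuous_on UNIV \<tau>"
    unfolding \<sigma>_def \<tau>_def cross2_def by (intro continuous_intros; simp)+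
  then have "open T"
    unfolding T_def by (intro open_Int open_Collect_less continuous_intros)
  moreover have "T \<subseteq> convex hull {P, Q, R}"
  proof
    fix z assume "z \<in> T"
    moreover have "z = P + \<sigma> z *\<^sub>R (Q - P) + \<tau> z *\<^sub>R (R - P)"
      using cross2_decomposition[OF cr, of "z - P"] by (simp add: \<sigma>_def \<tau>_def c_def algebra_simps)
    ultimately show "z \<in> convex hull {P, Q, R}"
      using triangle_point_in_convex_hull[of "\<sigma> z" "\<tau> z" P Q R] by (simp add: T_def)
  qed
  moreover have "P + s *\<^sub>R (Q - P) + t *\<^sub>R (R - P) \<in> T"
  proof -
    have "\<sigma> (P + s *\<^sub>R (Q - P) + t *\<^sub>R (R - P)) = s" "\<tau> (P + s *\<^sub>R (Q - P) + t *\<^sub>R (R - P)) = t"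
      using cr unfolding \<sigma>_def \<tau>_def c_def by (simp_all add: cross2_def field_simps)
    then show ?thesis using st by (simp add: T_def)
  qed
  ultimately show ?thesis by (meson interior_maximal subsetD)
qed

lemma subgrad_vertex_le:
  "y \<in> subgrad_vertex \<phi> K q \<Longrightarrow> u \<in> K \<Longrightarrow> y \<bullet> (u - q) \<le> \<phi> u - \<phi> q"
  by (simp add: subgrad_vertex_def)

lemma closed_subgrad_vertex: "closed (subgrad_vertex \<phi> K q)"
  and convex_subgrad_vertex: "convex (subgrad_vertex \<phi> K q)"
proof -
  have eq: "subgrad_vertex \<phi> K q = (\<Inter>u\<in>K. {y. (u - q) \<bullet> y \<le> \<phi> u - \<phi> q})"
    by (auto simp: subgrad_vertex_def inner_commute)
  show "closed (subgrad_vertex \<phi> K q)" unfolding eq by (intro closed_INT ballI closed_halfspace_le)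
  show "convex (subgrad_vertex \<phi> K q)" unfolding eq by (intro convex_INT ballI convex_halfspace_le)
qed

lemma subgrad_vertex_segment_le:
  assumes conv: "convex_on K \<phi>" and PQ: "P \<in> K" "Q \<in> K"
    and y: "y \<in> subgrad_vertex \<phi> K Q" and s: "0 \<le> s" "s \<le> 1"
  shows "\<phi> (P + s *\<^sub>R (Q - P)) - \<phi> P \<le> s * (y \<bullet> (Q - P))"
proof -
  have "\<phi> (P + s *\<^sub>R (Q - P)) \<le> (1 - s) * \<phi> P + s * \<phi> Q"
    using convex_onD[OF conv, of s P Q] PQ s by (simp add: algebra_simps)
  moreover have "(1 - s) * \<phi> P + s * \<phi> Q - \<phi> P = s * (\<phi> Q - \<phi> P)" by (simp add: algebra_simps)
  moreover have "\<phi> Q - \<phi> P \<le> y \<bullet> (Q - P)"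
    using subgrad_vertex_le[OF y PQ(1)] by (simp add: inner_diff_right)
  then have "s * (\<phi> Q - \<phi> P) \<le> s * (y \<bullet> (Q - P))" using s(1) by (rule mult_left_mono)
  ultimately show ?thesis by linarith
qed

lemma subgrad_vertex_disjoint:
  fixes \<phi> :: "real^2 \<Rightarrow> real"
  assumes U: "open U" and f: "Ck_on 2 \<phi> U" and conv: "convex_on K \<phi>"
    and MA: "0 < c" "\<And>u. u \<in> U \<Longrightarrow> c \<le> det (hessian \<phi> u)"
    and cr: "cross2 (Q - P) (R - P) \<noteq> 0"
    and hull: "convex hull {P, Q, R} \<subseteq> K" and int: "interior (convex hull {P, Q, R}) \<subseteq> U"
  shows "subgrad_vertex \<phi> K P \<inter> subgrad_vertex \<phi> K Q = {}"
proof (rule equals0I)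
  fix y assume y: "y \<in> subgrad_vertex \<phi> K P \<inter> subgrad_vertex \<phi> K Q"
  define D where "D = Q - P"
  define E where "E = R - P"
  define X where "X s t = P + s *\<^sub>R D + t *\<^sub>R E" for s t
  define g where "g s t = \<phi> (X s t) - (\<phi> P + (s * (y \<bullet> D) + t * (y \<bullet> E)))" for s t
  have inK: "X s t \<in> K" if "(s, t) \<in> unit_triangle" for s t
    using triangle_point_in_convex_hull[of s t P Q R] that hull by (auto simp: X_def D_def E_def unit_triangle_def)
  have inU: "X s t \<in> U" if "0 < s" "0 < t" "s + t < 1" for s t
    using triangle_point_in_interior_convex_hull[OF cr that] int by (auto simp: X_def D_def E_def)
  have PQ: "P \<in> K" "Q \<in> K" using hull hull_subset[of "{P, Q, R}" convex] by auto
  have f1: "Ck_on 1 \<phi> U" using Ck_on_SucD[of 1 \<phi> U] f by (simp add: numeral_2_eq_2)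
  have Xs: "X s t = (P + t *\<^sub>R E) + s *\<^sub>R D" for s t by (simp add: X_def algebra_simps)
  show False
  proof (rule no_edge_contact_of_MA_lower_bound[where g = g
        and gs = "\<lambda>s t. dir_deriv \<phi> D (X s t) - y \<bullet> D" and gt = "\<lambda>s t. dir_deriv \<phi> E (X s t) - y \<bullet> E"
        and gss = "\<lambda>s t. hessian_form \<phi> D D (X s t)" and gtt = "\<lambda>s t. hessian_form \<phi> E E (X s t)"
        and c = "c * (cross2 D E)^2"])
    have "convex_on unit_triangle (\<lambda>x. \<phi> (P + (fst x *\<^sub>R D + snd x *\<^sub>R E))
        - (\<phi> P + (fst x * (y \<bullet> D) + snd x * (y \<bullet> E))))"
      by (intro convex_on_diff_affine convex_on_compose_affine[OF conv] convex_unit_triangle)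
        (use inK in \<open>auto intro!: linearI simp: X_def algebra_simps\<close>)
    then show "convex_on unit_triangle (\<lambda>(s, t). g s t)"
      by (simp add: g_def X_def case_prod_unfold add.assoc)
    show "0 \<le> g s t" if "(s, t) \<in> unit_triangle" for s t
      using subgrad_vertex_le[of y \<phi> K P "X s t"] y inK[OF that]
      by (simp add: g_def X_def inner_add_right)
    show "g s 0 \<le> 0" if "0 \<le> s" "s \<le> 1" for s
      using subgrad_vertex_segment_le[OF conv PQ _ that, of y] y by (simp add: g_def X_def D_def)
    show "((\<lambda>s. g s t) has_real_derivative dir_deriv \<phi> D (X s t) - y \<bullet> D) (at s)"
      if "0 < s" "0 < t" "s + t < 1" for s t
      using has_real_derivative_along_line[OF U f1, of "P + t *\<^sub>R E" s D] inU[OF that]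
      unfolding g_def Xs by (auto intro!: derivative_eq_intros)
    show "((\<lambda>t. g s t) has_real_derivative dir_deriv \<phi> E (X s t) - y \<bullet> E) (at t)"
      if "0 < s" "0 < t" "s + t < 1" for s t
      using has_real_derivative_along_line[OF U f1, of "P + s *\<^sub>R D" t E] inU[OF that]
      unfolding g_def X_def by (auto intro!: derivative_eq_intros)
    show "((\<lambda>s. dir_deriv \<phi> D (X s t) - y \<bullet> D) has_real_derivative hessian_form \<phi> D D (X s t)) (at s)"
      if "0 < s" "0 < t" "s + t < 1" for s t
      using has_real_derivative_dir_deriv_along_line[OF U f, of "P + t *\<^sub>R E" s D D] inU[OF that]
      unfolding Xs by (auto intro!: derivative_eq_intros)
    show "((\<lambda>t. dir_deriv \<phi> E (X s t) - y \<bullet> E) has_real_derivative hessian_form \<phi> E E (X s t)) (at t)"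
      if "0 < s" "0 < t" "s + t < 1" for s t
      using has_real_derivative_dir_deriv_along_line[OF U f, of "P + s *\<^sub>R D" t E E] inU[OF that]
      unfolding X_def by (auto intro!: derivative_eq_intros)
    show "c * (cross2 D E)^2 \<le> hessian_form \<phi> D D (X s t) * hessian_form \<phi> E E (X s t)"
      if "0 < s" "0 < t" "s + t < 1" for s t
      using hessian_form_product_ge[OF U f inU[OF that] MA(2)[OF inU[OF that]]] .
    show "0 < c * (cross2 D E)^2" using MA(1) cr by (simp add: D_def E_def)
    have "continuous_on {(s, t). 0 < s \<and> 0 < t \<and> s + t < 1} (\<lambda>x. hessian_form \<phi> E E (X (fst x) (snd x)))"
      by (rule continuous_on_compose2[OF continuous_on_hessian_form[OF f]])
        (use inU in \<open>auto intro!: continuous_intros simp: X_def\<close>)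
    then show "continuous_on {(s, t). 0 < s \<and> 0 < t \<and> s + t < 1} (\<lambda>(s, t). hessian_form \<phi> E E (X s t))"
      by (simp add: case_prod_unfold)
  qed
qed

lemma ccw_convex_polygonD:
  assumes "ccw_convex_polygon n p"
  shows "3 \<le> n"
    and "\<And>i k. i < n \<Longrightarrow> k < n \<Longrightarrow> k \<noteq> i \<Longrightarrow> k \<noteq> Suc i mod n \<Longrightarrow>
      cross2 (p (Suc i mod n) - p i) (p k - p i) > 0"
  using assms by (auto simp: ccw_convex_polygon_def)

lemma ccw_convex_polygon_cross2_012:
  assumes "ccw_convex_polygon n p"
  shows "cross2 (p 1 - p 0) (p 2 - p 0) > 0"
  using ccw_convex_polygonD[OF assms] by fastforce

lemma ccw_convex_polygon_third_vertex:
  assumes poly: "ccw_convex_polygon n p" and ij: "i < n" "j < n" "i \<noteq> j"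
  obtains k where "k < n" "cross2 (p j - p i) (p k - p i) \<noteq> 0"
proof -
  note n = ccw_convex_polygonD(1)[OF poly] and ccw = ccw_convex_polygonD(2)[OF poly]
  show ?thesis
  proof (cases "j = Suc i mod n")
    case True
    have "Suc j mod n \<noteq> i" "Suc j mod n \<noteq> Suc i mod n" using n ij True by (auto simp: mod_Suc)
    then have "cross2 (p j - p i) (p (Suc j mod n) - p i) > 0" using ccw[of i "Suc j mod n"] ij True by simp
    then show ?thesis using that[of "Suc j mod n"] n by simp
  next
    case False
    have "cross2 (p j - p i) (p (Suc i mod n) - p i) = - cross2 (p (Suc i mod n) - p i) (p j - p i)"
      by (simp add: cross2_def algebra_simps)
    then have "cross2 (p j - p i) (p (Suc i mod n) - p i) < 0" using ccw[of i j] ij False by simp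
    then show ?thesis using that[of "Suc i mod n"] n by simp
  qed
qed

lemma ccw_convex_polygon_closure_interior:
  assumes poly: "ccw_convex_polygon n p"
  shows "closure (interior (convex hull (p ` {..<n}))) = convex hull (p ` {..<n})"
proof -
  have n: "3 \<le> n" using ccw_convex_polygonD(1)[OF poly] .
  have "p 0 + (1/3) *\<^sub>R (p 1 - p 0) + (1/3) *\<^sub>R (p 2 - p 0) \<in> interior (convex hull {p 0, p 1, p 2})"
    using ccw_convex_polygon_cross2_012[OF poly] by (intro triangle_point_in_interior_convex_hull) auto
  moreover have "interior (convex hull {p 0, p 1, p 2}) \<subseteq> interior (convex hull (p ` {..<n}))"
    using n by (intro interior_mono hull_mono) auto
  ultimately have "interior (convex hull (p ` {..<n})) \<noteq> {}" by blast
  moreover have "closed (convex hull (p ` {..<n}))"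
    by (simp add: compact_imp_closed finite_imp_compact_convex_hull)
  ultimately show ?thesis by (simp add: convex_closure_interior)
qed

lemma inverse_distance_sum_ge:
  fixes p :: "nat \<Rightarrow> 'a::real_normed_vector"
  assumes I: "finite I" "i \<in> I" "j \<in> I" and pij: "p i \<noteq> p j"
    and R: "\<And>k. k \<in> I \<Longrightarrow> norm (u - p k) \<le> R"
  shows "1 / (2 * R) \<le> (\<Sum>k\<in>I. 1 / (2 * norm (u - p k)))"
proof -
  obtain k where k: "k \<in> I" "u \<noteq> p k" using I pij by metis
  then have pos: "0 < norm (u - p k)" by simp
  with R[OF k(1)] have "0 < R * norm (u - p k)" by (meson less_le_trans mult_pos_pos)
  then have "1 / (2 * R) \<le> 1 / (2 * norm (u - p k))"
    using R[OF k(1)] by (intro divide_left_mono) auto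
  also have "\<dots> \<le> (\<Sum>k\<in>I. 1 / (2 * norm (u - p k)))"
    using I k by (intro member_le_sum) auto
  finally show ?thesis .
qed

lemma ccw_convex_polygon_inverse_distance_sum_bound:
  assumes poly: "ccw_convex_polygon n p"
  obtains c where "0 < c" "\<And>u. u \<in> convex hull (p ` {..<n}) \<Longrightarrow> c \<le> (\<Sum>k<n. 1 / (2 * norm (u - p k)))"
proof -
  let ?H = "convex hull (p ` {..<n})"
  have n: "3 \<le> n" using ccw_convex_polygonD(1)[OF poly] .
  have p01: "p 0 \<noteq> p 1" using ccw_convex_polygon_cross2_012[OF poly] by (auto simp: cross2_def)
  have "bounded ?H" by (simp add: compact_imp_bounded finite_imp_compact_convex_hull)
  then obtain R where R: "\<And>x. x \<in> ?H \<Longrightarrow> norm x \<le> R" by (auto simp: bounded_iff)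
  have pH: "p k \<in> ?H" if "k < n" for k using that by (simp add: hull_inc)
  have "0 \<le> R" using R[OF pH[of 0]] n norm_ge_zero[of "p 0"] by linarith
  moreover have "1 / (2 * (2 * R + 1)) \<le> (\<Sum>k<n. 1 / (2 * norm (u - p k)))" if u: "u \<in> ?H" for u
  proof (rule inverse_distance_sum_ge)
    show "norm (u - p k) \<le> 2 * R + 1" if "k \<in> {..<n}" for k
    proof -
      have "norm (u - p k) \<le> norm u + norm (p k)" by (rule norm_triangle_ineq4)
      also have "\<dots> \<le> R + R" using R[OF u] R[OF pH] that by (intro add_mono) auto
      finally show ?thesis by simp
    qed
  qed (use n p01 in auto)
  ultimately show ?thesis using that[of "1 / (2 * (2 * R + 1))"] by simp
qed

theorem mainTheorem6:
  fixes n :: nat and p :: "nat \<Rightarrow> real^2" and b :: "nat \<Rightarrow> real"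
    and A :: real and \<phi> :: "real^2 \<Rightarrow> real" and U :: "(real^2) set"
  assumes poly: "ccw_convex_polygon n p"
    and U_def: "U = interior (convex hull (p ` {..<n}))"
    and A: "A \<ge> 0"
    and cont: "continuous_on (closure U) \<phi>"
    and conv: "convex_on (closure U) \<phi>"
    and smooth: "smooth_on \<phi> U"
    and MA: "\<forall>u\<in>U. det (hessian \<phi> u) = A + (\<Sum>i<n. 1 / (2 * norm (u - p i)))"
    and vert: "\<forall>i<n. \<phi> (p i) = b i"
    and edge: "\<forall>i<n. \<forall>t\<in>{0..1::real}.
        \<phi> ((1 - t) *\<^sub>R p i + t *\<^sub>R p (Suc i mod n)) = (1 - t) * b i + t * b (Suc i mod n)"
  shows "(\<forall>i<n. closed (subgrad_vertex \<phi> (closure U) (p i))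
              \<and> convex (subgrad_vertex \<phi> (closure U) (p i)))
       \<and> (\<forall>i<n. \<forall>j<n. i \<noteq> j \<longrightarrow>
              subgrad_vertex \<phi> (closure U) (p i) \<inter> subgrad_vertex \<phi> (closure U) (p j) = {})
       \<and> (\<forall>i<n. subgrad_vertex \<phi> (closure U) (p i) \<subseteq>
              {y. y \<bullet> (p (Suc i mod n) - p i) \<le> b (Suc i mod n) - b i}
            \<inter> {y. y \<bullet> (p ((i + n - 1) mod n) - p i) \<le> b ((i + n - 1) mod n) - b i})"
proof -
  have n: "3 \<le> n" using ccw_convex_polygonD(1)[OF poly] .
  have clU: "closure U = convex hull (p ` {..<n})"
    using ccw_convex_polygon_closure_interior[OF poly] by (simp add: U_def)
  then have pU: "p i \<in> closure U" if "i < n" for i using that by (simp add: hull_inc)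
  obtain c where c: "0 < c" "\<And>u. u \<in> closure U \<Longrightarrow> c \<le> (\<Sum>k<n. 1 / (2 * norm (u - p k)))"
    using ccw_convex_polygon_inverse_distance_sum_bound[OF poly] clU by metis
  have MA_ge: "c \<le> det (hessian \<phi> u)" if "u \<in> U" for u
    using c(2)[of u] MA A that closure_subset by fastforce
  have sm: "Ck_on 2 \<phi> U" using smooth unfolding smooth_on_def by blast
  show ?thesis
  proof (intro conjI allI impI)
    show "closed (subgrad_vertex \<phi> (closure U) (p i))" "convex (subgrad_vertex \<phi> (closure U) (p i))" for i
      by (rule closed_subgrad_vertex convex_subgrad_vertex)+
  next
    fix i j assume ij: "i < n" "j < n" "i \<noteq> j"
    then obtain k where k: "k < n" "cross2 (p j - p i) (p k - p i) \<noteq> 0"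
      using ccw_convex_polygon_third_vertex[OF poly] by metis
    have "convex hull {p i, p j, p k} \<subseteq> convex hull (p ` {..<n})"
      using ij k by (intro hull_mono) simp
    then have "convex hull {p i, p j, p k} \<subseteq> closure U" "interior (convex hull {p i, p j, p k}) \<subseteq> U"
      using clU interior_mono unfolding U_def by simp_all
    then show "subgrad_vertex \<phi> (closure U) (p i) \<inter> subgrad_vertex \<phi> (closure U) (p j) = {}"
      by (intro subgrad_vertex_disjoint[OF _ sm conv c(1) MA_ge k(2)]) (auto simp: U_def)
  next
    fix i assume i: "i < n"
    have "y \<bullet> (p m - p i) \<le> b m - b i" if "m < n" "y \<in> subgrad_vertex \<phi> (closure U) (p i)" for m y
      using subgrad_vertex_le[OF that(2) pU[OF that(1)]] vert that(1) i by simp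
    moreover have "Suc i mod n < n" "(i + n - 1) mod n < n" using n by auto
    ultimately show "subgrad_vertex \<phi> (closure U) (p i) \<subseteq>
        {y. y \<bullet> (p (Suc i mod n) - p i) \<le> b (Suc i mod n) - b i}
      \<inter> {y. y \<bullet> (p ((i + n - 1) mod n) - p i) \<le> b ((i + n - 1) mod n) - b i}"
      by blast
  qed
qed

end
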